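(* If $\mathbf M\in\mathcal M_1$ and $\mathbf F(\mathbf s)\neq\mathbf M\mathbf s$, then for each $i\in\mathbb N$ there exists $n=n(i)$ such that $$F_i(n;\mathbf 0)=\mathbb P\big(\|\mathbf Z_i(n)\|_1=0\big)>0.$$
   Context: A GWBP/$\infty$ has types $\mathbb N=\{1,2,\dots\}$. Each particle lives one unit of time; a type-$i$ particle produces, independently of everything else, a random vector $\mathbf Z_i=(Z_{ij})_{j\in\mathbb N}$ of children, with $Z_i:=\sum_jZ_{ij}<\infty$ a.s. $\mathbf Z_i(n)=(Z_{ij}(n))_j$ is the generation-$n$ population from one type-$i$ particle, $\|\mathbf Z_i(n)\|_1=\sum_jZ_{ij}(n)$. $F_i(n;\mathbf s)=\mathbb E\prod_js_j^{Z_{ij}(n)}$, $F_i(\mathbf s)=F_i(1;\mathbf s)$; "$\mathbf F(\mathbf s)\neq\mathbf M\mathbf s$" means it is not true that $F_i(\mathbf s)=\sum_jM_{ij}s_j$ for all $i,\mathbf s$. Mean matrix $\mathbf M=(M_{ij})$, $M_{ij}=\mathbb EZ_{ij}$, $M^{(n)}_{ij}=\mathbb EZ_{ij}(n)$, $M_i=\sum_jM_{ij}$. Irreducible: for all $i,j$ some $M^{(n)}_{ij}>0$; aperiodic: gcd of such $n$ is 1; then $\lim_n(M^{(n)}_{ij})^{1/n}=1/R$ for a common $R$. $\mathbf M\in\mathcal M_1$ means: (i) irreducible, aperiodic, $R=1$, 1-recurrent ($\sum_nM^{(n)}_{ij}=\infty$) and 1-positive ($\lim_nM^{(n)}_{ij}>0$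 for all $i,j$); then there are positive eigenvectors $\mathbf v\mathbf M=\mathbf v$, $\mathbf M\mathbf u^T=\mathbf u^T$, unique up to positive multiples, normalized with $\sum_jv_ju_j=1$; (ii) $\sum_jv_j=1$ and $\sup_iu_i<\infty$; (iii) $\lim_{N\to\infty}\sup_iM_i^{-1}\sum_{j>N}M_{ij}=0$ and $\lim_{K\to\infty}\sup_iM_i^{-1}\mathbb E[Z_i;Z_i>K]=0$. *)

theory Defs
  imports "HOL-Probability.Probability"
begin

text \<open>Types are indexed by nat (type 0 here corresponds to type 1 in the paper).
An offspring vector (Z_ij)_j with finite total Z_i is a finitely supported
nat-valued vector, i.e. a multiset of types: count z j = Z_ij, size z = Z_i.
The process is given by its offspring laws  P :: nat => nat multiset pmf.\<close>

definition offspring :: "(nat \<Rightarrow> nat multiset pmf) \<Rightarrow> nat multiset \<Rightarrow> nat multiset pmf" where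
  "offspring P z = foldr (\<lambda>j acc. bind_pmf acc (\<lambda>a. map_pmf (\<lambda>b. a + b) (P j)))
                         (sorted_list_of_multiset z) (return_pmf {#})"

fun gen :: "(nat \<Rightarrow> nat multiset pmf) \<Rightarrow> nat \<Rightarrow> nat \<Rightarrow> nat multiset pmf" where
  "gen P 0 i = return_pmf {#i#}"
| "gen P (Suc n) i = bind_pmf (gen P n i) (offspring P)"

definition Fn :: "(nat \<Rightarrow> nat multiset pmf) \<Rightarrow> nat \<Rightarrow> nat \<Rightarrow> (nat \<Rightarrow> real) \<Rightarrow> real" where
  "Fn P n i s = measure_pmf.expectation (gen P n i) (\<lambda>z. \<Prod>j\<in>set_mset z. s j ^ count z j)"

definition F :: "(nat \<Rightarrow> nat multiset pmf) \<Rightarrow> nat \<Rightarrow> (nat \<Rightarrow> real) \<Rightarrow> real" where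
  "F P i s = Fn P 1 i s"

definition Mn :: "(nat \<Rightarrow> nat multiset pmf) \<Rightarrow> nat \<Rightarrow> nat \<Rightarrow> nat \<Rightarrow> ennreal" where
  "Mn P n i j = (\<integral>\<^sup>+ z. ennreal (real (count z j)) \<partial>(measure_pmf (gen P n i)))"

definition Mmat :: "(nat \<Rightarrow> nat multiset pmf) \<Rightarrow> nat \<Rightarrow> nat \<Rightarrow> ennreal" where
  "Mmat P i j = Mn P 1 i j"

definition Mrow :: "(nat \<Rightarrow> nat multiset pmf) \<Rightarrow> nat \<Rightarrow> ennreal" where
  "Mrow P i = (\<Sum>j. Mmat P i j)"

text \<open>The class M_1 (conditions (i)-(iii)).  M_i is required to be finite and
positive, which the normalisations M_i^{-1} in (iii) presuppose.\<close>
definition in_M1 :: "(nat \<Rightarrow> nat multiset pmf) \<Rightarrow> bool" where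
  "in_M1 P \<longleftrightarrow>
    \<comment> \<open>(i) irreducible\<close>
    (\<forall>i j. \<exists>n. Mn P n i j > 0) \<and>
    \<comment> \<open>(i) aperiodic\<close>
    (\<forall>i. Gcd {n. 0 < n \<and> Mn P n i i > 0} = 1) \<and>
    \<comment> \<open>(i) R = 1: lim_n (M^(n)_ij)^(1/n) = 1\<close>
    (\<forall>i j. (\<lambda>n. root n (enn2real (Mn P n i j))) \<longlonglongrightarrow> 1) \<and>
    \<comment> \<open>(i) 1-recurrent\<close>
    (\<forall>i j. (\<Sum>n. Mn P n i j) = \<infinity>) \<and>
    \<comment> \<open>(i) 1-positive: lim_n M^(n)_ij exists and is > 0\<close>
    (\<forall>i j. \<exists>L. L > 0 \<and> (\<lambda>n. Mn P n i j) \<longlonglongrightarrow> L) \<and>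
    \<comment> \<open>(i)+(ii) positive left/right eigenvectors, normalised, with sum v = 1, sup u < \<infinity>\<close>
    (\<exists>v u :: nat \<Rightarrow> real.
        (\<forall>j. v j > 0) \<and> (\<forall>i. u i > 0) \<and>
        (\<forall>j. (\<Sum>i. ennreal (v i) * Mmat P i j) = ennreal (v j)) \<and>
        (\<forall>i. (\<Sum>j. Mmat P i j * ennreal (u j)) = ennreal (u i)) \<and>
        (\<Sum>j. ennreal (v j * u j)) = 1 \<and>
        (\<Sum>j. ennreal (v j)) = 1 \<and>
        bdd_above (range u)) \<and>
    \<comment> \<open>finiteness/positivity of M_i\<close>
    (\<forall>i. 0 < Mrow P i \<and> Mrow P i < \<infinity>) \<and>
    \<comment> \<open>(iii)\<close>
    ((\<lambda>N. SUP i. (\<Sum>j. if N < j then Mmat P i j else 0) / Mrow P i) \<longlonglongrightarrow> 0) \<and>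
    ((\<lambda>K. SUP i. (\<integral>\<^sup>+ z. (if K < size z then ennreal (real (size z)) else 0) \<partial>(measure_pmf (P i)))
                     / Mrow P i) \<longlonglongrightarrow> 0)"

end

theory Submission
  imports Defs
begin

text \<open>Call a type mortal if a population started from one particle of that type is extinct
with positive probability in some generation, and let \<open>I\<close> be the set of immortal types. A
particle of an immortal type almost surely has an immortal child, since otherwise all its
children could die out together; so the expected number \<open>m i\<close> of immortal children of a
type-\<open>i\<close> particle is at least \<open>1\<close> for \<open>i \<in> I\<close>. Pairing with the left eigenvector \<open>v\<close>, whose
total mass is finite, gives \<open>\<Sum>j\<in>I. v j = \<Sum>i. v i * m i \<ge> \<Sum>i\<in>I. v i\<close>, which forces \<open>m\<close> to be
the indicator of \<open>I\<close>. Hence mortal particles have only mortal children, and by irreducibility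
either all types are mortal or none is. In the latter case every particle has at least one
child and on average exactly one, hence exactly one almost surely, which makes \<open>F(s) = M s\<close>.\<close>

lemma offspring_add_mset:
  "offspring P (add_mset x z) = bind_pmf (offspring P z) (\<lambda>a. map_pmf (\<lambda>b. a + b) (P x))"
proof -
  define step where "step x acc = bind_pmf acc (\<lambda>a. map_pmf (\<lambda>b. a + b) (P x))"
    for x and acc :: "nat multiset pmf"
  have comm: "step x \<circ> step y = step y \<circ> step x" for x y
  proof
    fix acc
    show "(step x \<circ> step y) acc = (step y \<circ> step x) acc"
      unfolding step_def comp_def map_pmf_def bind_assoc_pmf bind_return_pmf
      by (rule bind_pmf_cong[OF refl], subst bind_commute_pmf) (simp add: add_ac)
  qed
  have fold: "offspring P z = fold step (sorted_list_of_multiset z) (return_pmf {#})" for z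
    unfolding offspring_def step_def[abs_def, symmetric] by (subst foldr_fold) (auto simp: comm)
  have "fold step (sorted_list_of_multiset (add_mset x z)) = fold step (sorted_list_of_multiset z @ [x])"
    by (rule fold_multiset_equiv) (auto simp: comm)
  then show ?thesis
    unfolding fold by (simp add: step_def)
qed

lemma offspring_empty [simp]: "offspring P {#} = return_pmf {#}"
  unfolding offspring_def by simp

lemma offspring_singleton [simp]: "offspring P {#i#} = P i"
  using offspring_add_mset[of P i "{#}"] by (simp add: map_pmf_def bind_return_pmf bind_return_pmf')

lemma set_pmf_offspring_add_mset:
  "set_pmf (offspring P (add_mset x z)) = {a + b |a b. a \<in> set_pmf (offspring P z) \<and> b \<in> set_pmf (P x)}"
  unfolding offspring_add_mset by auto

lemma add_in_set_pmf_offspring: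
  "x \<in> set_pmf (offspring P a) \<Longrightarrow> y \<in> set_pmf (offspring P b) \<Longrightarrow> x + y \<in> set_pmf (offspring P (a + b))"
proof (induction a arbitrary: x)
  case empty
  then show ?case by simp
next
  case (add u a)
  from add.prems(1) obtain x' c where x': "x' \<in> set_pmf (offspring P a)" "c \<in> set_pmf (P u)" "x = x' + c"
    unfolding set_pmf_offspring_add_mset by auto
  have "x' + y + c \<in> set_pmf (offspring P (add_mset u (a + b)))"
    unfolding set_pmf_offspring_add_mset using add.IH[OF x'(1) add.prems(2)] x'(2) by blast
  then show ?case using x'(3) by (simp add: add_ac)
qed

fun gen_mset :: "(nat \<Rightarrow> nat multiset pmf) \<Rightarrow> nat \<Rightarrow> nat multiset \<Rightarrow> nat multiset pmf" where
  "gen_mset P 0 z = return_pmf z"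
| "gen_mset P (Suc n) z = bind_pmf (gen_mset P n z) (offspring P)"

lemma gen_eq_gen_mset: "gen P n i = gen_mset P n {#i#}"
  by (induction n) auto

lemma gen_mset_Suc': "gen_mset P (Suc n) z = bind_pmf (offspring P z) (gen_mset P n)"
proof (induction n arbitrary: z)
  case 0
  then show ?case by (simp add: bind_return_pmf bind_return_pmf')
next
  case (Suc n)
  then show ?case
    by (simp add: bind_assoc_pmf)
qed

lemma gen_mset_empty [simp]: "gen_mset P n {#} = return_pmf {#}"
  by (induction n) (auto simp: bind_return_pmf)

lemma add_in_set_pmf_gen_mset:
  "x \<in> set_pmf (gen_mset P n a) \<Longrightarrow> y \<in> set_pmf (gen_mset P n b) \<Longrightarrow> x + y \<in> set_pmf (gen_mset P n (a + b))"
proof (induction n arbitrary: x y)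
  case 0
  then show ?case by simp
next
  case (Suc n)
  from Suc.prems obtain x' y' where "x' \<in> set_pmf (gen_mset P n a)" "x \<in> set_pmf (offspring P x')"
     "y' \<in> set_pmf (gen_mset P n b)" "y \<in> set_pmf (offspring P y')" by auto
  then show ?case using Suc.IH add_in_set_pmf_offspring by fastforce
qed

lemma extinct_gen_mset_mono:
  assumes "{#} \<in> set_pmf (gen_mset P n z)" and "n \<le> m"
  shows "{#} \<in> set_pmf (gen_mset P m z)"
  using assms(2)
proof (induction m rule: dec_induct)
  case (step m)
  then show ?case by (auto intro!: bexI[of _ "{#}"])
qed (use assms(1) in simp)

lemma offspring_closed:
  assumes closed: "\<forall>j\<in>D. \<forall>b\<in>set_pmf (P j). set_mset b \<subseteq> D"
  shows "set_mset z \<subseteq> D \<Longrightarrow> c \<in> set_pmf (offspring P z) \<Longrightarrow> set_mset c \<subseteq> D"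
proof (induction z arbitrary: c)
  case (add x z)
  then show ?case using closed unfolding set_pmf_offspring_add_mset by fastforce
qed simp

lemma gen_mset_closed:
  assumes closed: "\<forall>j\<in>D. \<forall>b\<in>set_pmf (P j). set_mset b \<subseteq> D"
  shows "set_mset z \<subseteq> D \<Longrightarrow> c \<in> set_pmf (gen_mset P n z) \<Longrightarrow> set_mset c \<subseteq> D"
proof (induction n arbitrary: c)
  case (Suc n)
  then show ?case using offspring_closed[OF closed] by (simp add: subset_iff) blast
qed simp

definition mortal :: "(nat \<Rightarrow> nat multiset pmf) \<Rightarrow> nat \<Rightarrow> bool" where
  "mortal P i \<longleftrightarrow> (\<exists>n. {#} \<in> set_pmf (gen P n i))"

lemma extinct_if_all_mortal:
  "\<forall>j\<in>#z. mortal P j \<Longrightarrow> \<exists>n. {#} \<in> set_pmf (gen_mset P n z)"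
proof (induction z)
  case empty
  then show ?case by simp
next
  case (add x z)
  then obtain n where n: "{#} \<in> set_pmf (gen_mset P n z)" by auto
  from add.prems obtain m where m: "{#} \<in> set_pmf (gen_mset P m {#x#})"
    by (auto simp: mortal_def gen_eq_gen_mset)
  have "{#} + {#} \<in> set_pmf (gen_mset P (max m n) ({#x#} + z))"
    by (intro add_in_set_pmf_gen_mset extinct_gen_mset_mono[OF m] extinct_gen_mset_mono[OF n]) auto
  then show ?case by auto
qed

lemma mortal_if_children_mortal:
  assumes "b \<in> set_pmf (P i)" and "\<forall>j\<in>#b. mortal P j"
  shows "mortal P i"
proof -
  obtain n where "{#} \<in> set_pmf (gen_mset P n b)"
    using extinct_if_all_mortal[OF assms(2)] by blast
  then have "{#} \<in> set_pmf (gen_mset P (Suc n) {#i#})"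
    unfolding gen_mset_Suc' using assms(1) by auto
  then show ?thesis
    unfolding mortal_def gen_eq_gen_mset by blast
qed

lemma closed_type_set_eq_UNIV:
  assumes irreducible: "\<forall>i j. \<exists>n. Mn P n i j > 0"
    and closed: "\<forall>j\<in>D. \<forall>b\<in>set_pmf (P j). set_mset b \<subseteq> D"
    and "d \<in> D"
  shows "D = UNIV"
proof (rule ccontr)
  assume "D \<noteq> UNIV"
  then obtain j where "j \<notin> D" by auto
  obtain n where pos: "Mn P n d j > 0" using irreducible by blast
  have "AE z in measure_pmf (gen P n d). ennreal (real (count z j)) = 0"
  proof (rule AE_pmfI)
    fix c assume "c \<in> set_pmf (gen P n d)"
    then have "set_mset c \<subseteq> D"
      using gen_mset_closed[OF closed, of "{#d#}"] \<open>d \<in> D\<close> by (simp add: gen_eq_gen_mset)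
    with \<open>j \<notin> D\<close> show "ennreal (real (count c j)) = 0" by (auto simp: count_eq_zero_iff)
  qed
  then have "Mn P n d j = 0" unfolding Mn_def by (simp add: nn_integral_0_iff_AE)
  with pos show False by simp
qed

lemma gen_1: "gen P 1 i = P i"
  by (simp add: bind_return_pmf)

lemma Mmat_eq_nn_integral: "Mmat P i j = (\<integral>\<^sup>+z. ennreal (real (count z j)) \<partial>measure_pmf (P i))"
  unfolding Mmat_def Mn_def by (simp add: gen_1)

lemma suminf_count_eq_size: "(\<Sum>j. ennreal (real (count z j))) = ennreal (real (size z))"
proof (induction z)
  case empty
  then show ?case by simp
next
  case (add x z)
  have "(\<Sum>j. ennreal (real (count (add_mset x z) j))) =
        (\<Sum>j. ennreal (real (count z j)) + (if j = x then 1 else 0))"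
    by (rule suminf_cong) (auto simp: add.commute)
  also have "\<dots> = (\<Sum>j. ennreal (real (count z j))) + (\<Sum>j. if j = x then 1 else 0 :: ennreal)"
    by (rule suminf_add[symmetric]) (auto intro: summableI)
  also have "(\<Sum>j. if j = x then 1 else 0 :: ennreal) = 1"
    using sums_single[of x "\<lambda>_. 1::ennreal"] by (simp add: sums_iff)
  finally show ?case using add.IH by (simp add: add.commute)
qed

lemma suminf_Mmat_restrict_eq:
  "(\<Sum>j. if j \<in> I then Mmat P i j else 0) =
   (\<integral>\<^sup>+z. ennreal (real (size (filter_mset (\<lambda>j. j \<in> I) z))) \<partial>measure_pmf (P i))"
proof -
  have "(\<Sum>j. if j \<in> I then Mmat P i j else 0) =
        (\<Sum>j. \<integral>\<^sup>+z. ennreal (real (count (filter_mset (\<lambda>j. j \<in> I) z) j)) \<partial>measure_pmf (P i))"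
    unfolding Mmat_eq_nn_integral by (rule suminf_cong) auto
  also have "\<dots> = (\<integral>\<^sup>+z. ennreal (real (size (filter_mset (\<lambda>j. j \<in> I) z))) \<partial>measure_pmf (P i))"
    by (subst nn_integral_suminf[symmetric]) (simp_all del: count_filter_mset add: suminf_count_eq_size)
  finally show ?thesis .
qed

lemma ennreal_suminf_swap:
  fixes f :: "nat \<Rightarrow> nat \<Rightarrow> ennreal"
  shows "(\<Sum>i. \<Sum>j. f i j) = (\<Sum>j. \<Sum>i. f i j)"
proof -
  have "(\<Sum>i. \<Sum>j. f i j) = (\<Sum>i. \<integral>\<^sup>+j. f i j \<partial>count_space UNIV)"
    by (simp add: nn_integral_count_space_nat)
  also have "\<dots> = (\<integral>\<^sup>+j. (\<Sum>i. f i j) \<partial>count_space UNIV)"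
    by (rule nn_integral_suminf[symmetric]) auto
  also have "\<dots> = (\<Sum>j. \<Sum>i. f i j)"
    by (simp add: nn_integral_count_space_nat)
  finally show ?thesis .
qed

lemma restricted_row_sums_eq_indicator:
  fixes M :: "nat \<Rightarrow> nat \<Rightarrow> ennreal" and v :: "nat \<Rightarrow> ennreal"
  assumes v_nonzero: "\<And>i. v i \<noteq> 0" and v_finite: "(\<Sum>i. v i) \<noteq> \<top>"
    and subinvariant: "\<And>j. (\<Sum>i. v i * M i j) \<le> v j"
    and row_sum_ge: "\<And>i. i \<in> I \<Longrightarrow> 1 \<le> (\<Sum>j. if j \<in> I then M i j else 0)"
  shows "(\<Sum>j. if j \<in> I then M i j else 0) = (if i \<in> I then 1 else 0)"
proof -
  define S where "S i = (\<Sum>j. if j \<in> I then M i j else 0)" for i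
  define a where "a i = (if i \<in> I then 1 else 0 :: ennreal)" for i
  define mass where "mass = (\<Sum>i. v i * a i)"
  have a_le_S: "a i \<le> S i" for i
    using row_sum_ge by (auto simp: a_def S_def)
  have "mass \<le> (\<Sum>i. v i)"
    unfolding mass_def a_def by (rule suminf_le) (auto intro: summableI)
  with v_finite have mass_finite: "mass \<noteq> \<top>"
    by (auto simp: top_unique)
  have "mass + (\<Sum>i. v i * (S i - a i)) = (\<Sum>i. v i * a i + v i * (S i - a i))"
    unfolding mass_def by (rule suminf_add) (auto intro: summableI)
  also have "\<dots> = (\<Sum>i. v i * S i)"
    by (rule suminf_cong) (simp add: distrib_left[symmetric] add_diff_inverse_ennreal a_le_S)
  also have "\<dots> = (\<Sum>i. \<Sum>j. v i * (if j \<in> I then M i j else 0))"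
    unfolding S_def by (simp add: ennreal_suminf_cmult)
  also have "\<dots> = (\<Sum>j. \<Sum>i. v i * (if j \<in> I then M i j else 0))"
    by (rule ennreal_suminf_swap)
  also have "\<dots> \<le> (\<Sum>j. v j * a j)"
    using subinvariant by (intro suminf_le) (auto simp: a_def intro: summableI)
  finally have "mass + (\<Sum>i. v i * (S i - a i)) \<le> mass + 0"
    by (simp add: mass_def)
  then have "(\<Sum>i. v i * (S i - a i)) = 0"
    using mass_finite by (simp add: ennreal_add_left_cancel_le)
  then have "v i * (S i - a i) = 0"
    using suminf_eq_zero_iff[of "\<lambda>i. v i * (S i - a i)"] by (auto intro: summableI)
  then have "S i \<le> a i"
    using v_nonzero by (simp add: diff_eq_0_iff_ennreal)
  with a_le_S[of i] show ?thesis
    by (simp add: S_def a_def)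
qed

lemma eq_1_if_ge_1_and_mean_1:
  fixes f :: "'a \<Rightarrow> nat"
  assumes ge: "\<And>x. x \<in> set_pmf p \<Longrightarrow> 1 \<le> f x"
    and mean: "(\<integral>\<^sup>+x. ennreal (real (f x)) \<partial>measure_pmf p) = 1"
    and "x \<in> set_pmf p"
  shows "f x = 1"
proof -
  have "(\<integral>\<^sup>+x. ennreal (real (f x)) - 1 \<partial>measure_pmf p) = 0"
    using ge by (subst nn_integral_diff) (auto simp: mean measure_pmf.emeasure_space_1 intro!: AE_pmfI)
  then have "AE x in measure_pmf p. ennreal (real (f x)) - 1 = 0"
    by (simp add: nn_integral_0_iff_AE)
  then have "ennreal (real (f x)) \<le> 1"
    using \<open>x \<in> set_pmf p\<close> by (simp add: AE_measure_pmf_iff diff_eq_0_iff_ennreal)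
  with ge[OF \<open>x \<in> set_pmf p\<close>] show ?thesis
    by simp
qed

lemma expectation_pmf_nat_eq_suminf:
  fixes Q :: "nat pmf" and s :: "nat \<Rightarrow> real"
  assumes nonneg: "\<And>k. 0 \<le> s k" and int: "integrable (measure_pmf Q) s"
  shows "measure_pmf.expectation Q s = (\<Sum>k. pmf Q k * s k)"
proof -
  have sum_eq: "ennreal (measure_pmf.expectation Q s) = (\<Sum>k. ennreal (pmf Q k * s k))"
  proof -
    have "ennreal (measure_pmf.expectation Q s) = (\<integral>\<^sup>+k. ennreal (s k) \<partial>measure_pmf Q)"
      by (rule nn_integral_eq_integral[symmetric]) (use int nonneg in auto)
    also have "\<dots> = (\<Sum>k. ennreal (pmf Q k * s k))"
      by (simp add: nn_integral_measure_pmf nn_integral_count_space_nat ennreal_mult' nonneg)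
    finally show ?thesis .
  qed
  have terms_nonneg: "\<And>k. 0 \<le> pmf Q k * s k"
    using nonneg by simp
  have finite: "(\<Sum>k. ennreal (pmf Q k * s k)) \<noteq> \<top>"
    by (simp flip: sum_eq)
  have "ennreal (measure_pmf.expectation Q s) = ennreal (\<Sum>k. pmf Q k * s k)"
    using sum_eq suminf_ennreal[OF terms_nonneg finite] by simp
  moreover have "0 \<le> measure_pmf.expectation Q s"
    using nonneg by (simp add: integral_nonneg_AE)
  moreover have "0 \<le> (\<Sum>k. pmf Q k * s k)"
    by (rule suminf_nonneg[OF summable_suminf_not_top[OF terms_nonneg finite] terms_nonneg])
  ultimately show ?thesis
    by simp
qed

lemma F_eq_linear_if_single_child:
  assumes single: "\<And>b. b \<in> set_pmf (P i) \<Longrightarrow> size b = 1"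
    and s: "\<forall>j. 0 \<le> s j \<and> s j \<le> 1"
  shows "F P i s = (\<Sum>j. enn2real (Mmat P i j) * s j)"
proof -
  define Q where "Q = map_pmf (\<lambda>b. the_elem (set_mset b)) (P i)"
  have PQ: "P i = map_pmf (\<lambda>j. {#j#}) Q"
    unfolding Q_def map_pmf_comp
    by (rule map_pmf_idI[symmetric]) (metis single size_1_singleton_mset set_mset_single the_elem_eq)
  have "Mmat P i j = ennreal (pmf Q j)" for j
  proof -
    have "(\<lambda>k. ennreal (real (count {#k#} j))) = indicator {j}"
      by (auto simp: indicator_def)
    then show ?thesis
      unfolding Mmat_eq_nn_integral PQ nn_integral_map_pmf by (simp add: emeasure_pmf_single)
  qed
  moreover have "F P i s = measure_pmf.expectation Q s"
    unfolding F_def Fn_def gen_1 PQ by simp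
  moreover have "integrable (measure_pmf Q) s"
    by (rule measure_pmf.integrable_const_bound[where B=1]) (use s in auto)
  ultimately show ?thesis
    using s by (simp add: expectation_pmf_nat_eq_suminf)
qed

lemma Fn_zero_eq_prob_extinct: "Fn P n i (\<lambda>_. 0) = measure_pmf.prob (gen P n i) {z. size z = 0}"
proof -
  have "(\<Prod>j\<in>set_mset z. (0::real) ^ count z j) = indicator {z. size z = 0} z" for z :: "nat multiset"
    by (cases "z = {#}") (auto simp: indicator_def intro!: prod_zero)
  then show ?thesis
    unfolding Fn_def by simp
qed

lemma mean_immortal_children_ge_1:
  assumes "\<not> mortal P i"
  shows "1 \<le> (\<Sum>j. if j \<in> {k. \<not> mortal P k} then Mmat P i j else 0)"
proof -
  have "1 \<le> size (filter_mset (\<lambda>j. j \<in> {k. \<not> mortal P k}) b)" if "b \<in> set_pmf (P i)" for b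
    using mortal_if_children_mortal[where P = P and i = i, OF that] assms
    by (auto simp: Suc_le_eq nonempty_has_size[symmetric])
  then have "(\<integral>\<^sup>+b. 1 \<partial>measure_pmf (P i)) \<le>
      (\<integral>\<^sup>+b. ennreal (real (size (filter_mset (\<lambda>j. j \<in> {k. \<not> mortal P k}) b))) \<partial>measure_pmf (P i))"
    by (intro nn_integral_mono_AE AE_pmfI) simp
  then show ?thesis
    by (simp only: suminf_Mmat_restrict_eq) (simp add: measure_pmf.emeasure_space_1)
qed

lemma children_avoid_if_restricted_mean_zero:
  assumes "(\<Sum>j. if j \<in> I then Mmat P i j else 0) = 0" and "b \<in> set_pmf (P i)"
  shows "set_mset b \<subseteq> -I"
proof -
  have "AE z in measure_pmf (P i). ennreal (real (size (filter_mset (\<lambda>j. j \<in> I) z))) = 0"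
    using assms(1) unfolding suminf_Mmat_restrict_eq by (subst (asm) nn_integral_0_iff_AE) auto
  then show ?thesis
    using assms(2) by (auto simp: AE_measure_pmf_iff)
qed

lemma single_child_if_all_immortal:
  assumes "\<forall>j. \<not> mortal P j" and "(\<Sum>j. Mmat P i j) = 1" and "b \<in> set_pmf (P i)"
  shows "size b = 1"
proof (rule eq_1_if_ge_1_and_mean_1[OF _ _ assms(3)])
  show "1 \<le> size c" if "c \<in> set_pmf (P i)" for c
    using mortal_if_children_mortal[where P = P and i = i, OF that] assms(1) by (cases c) auto
  show "(\<integral>\<^sup>+c. ennreal (real (size c)) \<partial>measure_pmf (P i)) = 1"
    using assms(2) suminf_Mmat_restrict_eq[of UNIV P i] by simp
qed

theorem lemma2:
  fixes P :: "nat \<Rightarrow> nat multiset pmf"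
  assumes "in_M1 P"
    and "\<not> (\<forall>i. \<forall>s. (\<forall>j. 0 \<le> s j \<and> s j \<le> 1) \<longrightarrow>
                 F P i s = (\<Sum>j. enn2real (Mmat P i j) * s j))"
  shows "\<forall>i. \<exists>n. Fn P n i (\<lambda>_. 0) = measure_pmf.prob (gen P n i) {z. size z = 0}
                 \<and> Fn P n i (\<lambda>_. 0) > 0"
proof -
  from assms(1) have irreducible: "\<forall>i j. \<exists>n. Mn P n i j > 0"
    unfolding in_M1_def by blast
  from assms(1) obtain v :: "nat \<Rightarrow> real" where v_pos: "\<And>j. v j > 0"
    and v_left_eigen: "\<And>j. (\<Sum>i. ennreal (v i) * Mmat P i j) = ennreal (v j)"
    and v_mass: "(\<Sum>j. ennreal (v j)) = 1"
    unfolding in_M1_def by blast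
  define I where "I = {k. \<not> mortal P k}"
  have row_sums: "(\<Sum>j. if j \<in> I then Mmat P i j else 0) = (if i \<in> I then 1 else 0)" for i
    unfolding I_def using v_pos v_left_eigen v_mass mean_immortal_children_ge_1
    by (intro restricted_row_sums_eq_indicator[where v = "\<lambda>i. ennreal (v i)"])
      (auto simp: ennreal_eq_0_iff not_le)
  have mortal_closed: "\<forall>j\<in>-I. \<forall>b\<in>set_pmf (P j). set_mset b \<subseteq> -I"
    by (intro ballI children_avoid_if_restricted_mean_zero) (auto simp: row_sums)
  have all_mortal: "\<forall>j. mortal P j"
  proof (rule ccontr)
    assume "\<not> (\<forall>j. mortal P j)"
    with closed_type_set_eq_UNIV[OF irreducible mortal_closed] have "\<forall>j. \<not> mortal P j"
      by (auto simp: I_def)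
    moreover have "(\<Sum>j. Mmat P i j) = 1" for i
      using row_sums[of i] \<open>\<forall>j. \<not> mortal P j\<close> by (simp add: I_def)
    ultimately show False
      using assms(2) F_eq_linear_if_single_child single_child_if_all_immortal by metis
  qed
  then show ?thesis
    using measure_pmf_posI Fn_zero_eq_prob_extinct unfolding mortal_def by fastforce
qed

end
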